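(* Let $\mathcal{U}$ be the set of all non-trivial parts that appear in some linear clobber game starting from a single part in $\mathcal{A}=\{(\mathtt{ox})^n : n\ge 1\}$. Let $\mathcal{O}=\{\mathtt{o}(\mathtt{xo})^t : t\ge 0\}$, $o\mathcal{A}=\{\mathtt{o}(\mathtt{ox})^t : t\ge 0\}$, $o\mathcal{O}=\{\mathtt{oo}(\mathtt{xo})^t : t\ge 0\}$, $o\mathcal{O}o=\{\mathtt{oo}(\mathtt{xo})^t\mathtt{o} : t\ge 0\}$ and $o\mathcal{A}x=\{\mathtt{o}(\mathtt{ox})^n\mathtt{x} : n\ge 1\}$. Then $\mathcal{U}$ equals the set of non-trivial parts belonging to $$\mathcal{A}\cup\mathcal{O}\cup o\mathcal{A}\cup o\mathcal{O}\cup o\mathcal{O}o\cup o\mathcal{A}x\cup(-\mathcal{O})\cup(-o\mathcal{A})\cup(-o\mathcal{O})\cup(-o\mathcal{O}o).$$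
   Context: Linear clobber is a two-player game (Left owns black stones $\mathtt{x}$, Right owns white stones $\mathtt{o}$) played on a path of cells, each cell empty or holding one stone. On a turn, a player chooses one of their stones that is in a cell adjacent (consecutive on the path) to a cell holding an opponent stone, removes the opponent stone and moves their own stone into that cell, leaving its original cell empty. Players alternate; a player who cannot move loses. A part is a maximal block of consecutive non-empty cells, written as a word over $\{\mathtt{o},\mathtt{x}\}$; a position is the disjoint sum of its parts. A part and its left-right reversal are identified (e.g. $\mathtt{xo}$ is identified with $\mathtt{ox}$). Words are written by concatenation, with exponents denoting repetition. A part is trivial if no two adjacent stones have different colors. For a part $p$, $-p$ is obtained by swapping the colors $\mathtt{o}\leftrightarrow\mathtt{x}$ of every stone, and for a set $X$ of parts, $-X=\{-p : p\in X\}$. A part "appears in some game starting from" a part $q$ if it is a part of some position reachable from the position $q$ by a sequence of legal moves (by either player, in any order). *)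

theory Defs
  imports Main
begin

text \<open>Stones: Bx is Left's black stone x, Wo is Right's white stone o.\<close>
datatype stone = Bx | Wo

fun opp :: "stone \<Rightarrow> stone" where
  "opp Bx = Wo" | "opp Wo = Bx"

type_synonym board = "stone option list"

definition clobber_move :: "board \<Rightarrow> board \<Rightarrow> bool" where
  "clobber_move b b' \<longleftrightarrow>
     (\<exists>i j c. i < length b \<and> j < length b \<and> (j = Suc i \<or> i = Suc j) \<and>
        b ! i = Some c \<and> b ! j = Some (opp c) \<and>
        b' = (b[j := Some c])[i := None])"

definition reachable :: "board \<Rightarrow> board \<Rightarrow> bool" where
  "reachable = clobber_move\<^sup>*\<^sup>*"

definition is_part :: "stone list \<Rightarrow> board \<Rightarrow> bool" where
  "is_part p b \<longleftrightarrow> p \<noteq> [] \<and>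
     (\<exists>k. k + length p \<le> length b \<and> take (length p) (drop k b) = map Some p \<and>
          (k = 0 \<or> b ! (k - 1) = None) \<and>
          (k + length p = length b \<or> b ! (k + length p) = None))"

definition board_of :: "stone list \<Rightarrow> board" where
  "board_of w = map Some w"

definition nontrivial :: "stone list \<Rightarrow> bool" where
  "nontrivial p \<longleftrightarrow> (\<exists>i. Suc i < length p \<and> p ! i \<noteq> p ! Suc i)"

definition neg_part :: "stone list \<Rightarrow> stone list" where
  "neg_part p = map opp p"

definition rep :: "nat \<Rightarrow> stone list \<Rightarrow> stone list" where
  "rep n w = concat (replicate n w)"

definition famA :: "stone list set" where
  "famA = {rep n [Wo,Bx] | n. n \<ge> 1}"
definition famO :: "stone list set" where
  "famO = {[Wo] @ rep t [Bx,Wo] | t. True}"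
definition fam_oA :: "stone list set" where
  "fam_oA = {[Wo] @ rep t [Wo,Bx] | t. True}"
definition fam_oO :: "stone list set" where
  "fam_oO = {[Wo,Wo] @ rep t [Bx,Wo] | t. True}"
definition fam_oOo :: "stone list set" where
  "fam_oOo = {[Wo,Wo] @ rep t [Bx,Wo] @ [Wo] | t. True}"
definition fam_oAx :: "stone list set" where
  "fam_oAx = {[Wo] @ rep n [Wo,Bx] @ [Bx] | n. n \<ge> 1}"

definition famAll :: "stone list set" where
  "famAll = famA \<union> famO \<union> fam_oA \<union> fam_oO \<union> fam_oOo \<union> fam_oAx \<union>
            neg_part ` famO \<union> neg_part ` fam_oA \<union> neg_part ` fam_oO \<union> neg_part ` fam_oOo"

text \<open>Parts are identified with their reversals: w appears (up to reversal)
  in some game starting from a single part of A.\<close>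
definition appears_from_A :: "stone list \<Rightarrow> bool" where
  "appears_from_A w \<longleftrightarrow> (\<exists>q b p. q \<in> famA \<and> reachable (board_of q) b \<and>
       is_part p b \<and> (p = w \<or> p = rev w))"

end

theory Submission
  imports Defs "HOL-Library.Sublist"
begin

(* Call a word inner-alternating if adjacent stones differ everywhere except possibly at its
   two ends.  This property passes to factors and survives captures: a capture x o -> _ x inside
   a run u x o v leaves the runs u and x v, and x v is inner-alternating because o v is, the first
   stone being irrelevant.  As (ox)^n is alternating, every part of every position reachable from
   it is inner-alternating, and the non-trivial inner-alternating words are, up to reversal,
   exactly the words of the ten families.  Conversely, each family is realised from a suitable
   (ox)^n within two moves. *)

section \<open>Words and alternation\<close>

lemma opp_opp [simp]: "opp (opp s) = s"
  by (cases s) auto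

lemma neq_iff_opp: "t \<noteq> s \<longleftrightarrow> t = opp s"
  by (cases s; cases t) auto

lemma rep_0 [simp]: "rep 0 w = []"
  by (simp add: rep_def)

lemma rep_Suc: "rep (Suc n) w = w @ rep n w"
  by (simp add: rep_def)

lemma rep_Suc_right: "rep (Suc n) w = rep n w @ w"
  by (simp add: rep_def replicate_append_same[symmetric])

lemma rep_snoc: "rep n [a, b] @ [a] = a # rep n [b, a]"
  by (induction n) (simp_all add: rep_Suc)

lemma rep_append_Cons: "rep n [a, b] @ a # w = a # rep n [b, a] @ w"
  using rep_snoc[of n a b] by simp

lemma rep_rev: "rev (rep n [a, b]) = rep n [b, a]"
  by (induction n) (simp_all add: rep_Suc flip: rep_Suc_right)

lemma rep_map: "map f (rep n w) = rep n (map f w)"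
  by (simp add: rep_def map_concat)

lemma Cons_Cons_rep: "a # b # rep n [a, b] = rep (Suc n) [a, b]"
  by (simp add: rep_Suc)

lemma distinct_adj_rep: "a \<noteq> b \<Longrightarrow> distinct_adj (rep n [a, b])"
proof (induction n)
  case (Suc n)
  then show ?case by (cases n) (simp_all add: rep_Suc)
qed simp

lemma distinct_adj_Cons_rep:
  "distinct_adj (s # w) \<Longrightarrow>
    \<exists>n. s # w = rep (Suc n) [s, opp s] \<or> s # w = rep n [s, opp s] @ [s]"
proof (induction w arbitrary: s)
  case Nil
  show ?case by (rule exI[of _ 0]) simp
next
  case (Cons t w)
  then have "t = opp s" "distinct_adj (t # w)" by (simp_all add: neq_iff_opp)
  then obtain n where "t # w = rep (Suc n) [t, s] \<or> t # w = rep n [t, s] @ [t]"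
    using Cons.IH by fastforce
  then show ?case using \<open>t = opp s\<close>
    by (metis Cons_Cons_rep rep_snoc)
qed

lemma sublist_tl_tl:
  assumes "sublist u w" shows "sublist (tl u) (tl w)"
proof -
  obtain l r where w: "w = l @ u @ r"
    using assms by (auto simp: sublist_def)
  show ?thesis
  proof (cases l)
    case Nil
    then show ?thesis using w by (cases u) auto
  next
    case (Cons x l')
    then show ?thesis
      using w sublist_order.order.trans[OF sublist_tl[of u]] by auto
  qed
qed

lemma sublist_butlast_butlast: "sublist u w \<Longrightarrow> sublist (butlast u) (butlast w)"
  using sublist_tl_tl[of "rev u" "rev w"] by (metis butlast_rev rev_rev_ident sublist_rev)

lemma distinct_adj_sublist: "sublist u w \<Longrightarrow> distinct_adj w \<Longrightarrow> distinct_adj u"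
  by (auto simp: sublist_def)

lemma sublist_append_Cons_notin:
  assumes "sublist xs (ys @ y # zs)" "y \<notin> set xs"
  shows "sublist xs ys \<or> sublist xs zs"
  using assms by (auto simp: sublist_append sublist_Cons_right prefix_Cons)

definition inner_alternating :: "'a list \<Rightarrow> bool" where
  "inner_alternating w \<longleftrightarrow> distinct_adj (tl (butlast w))"

lemma inner_alternating_rev [simp]: "inner_alternating (rev w) \<longleftrightarrow> inner_alternating w"
proof -
  have "tl (rev v) = rev (butlast v)" for v :: "'a list"
    using butlast_rev[of "rev v"] by simp
  then have "tl (butlast (rev w)) = rev (tl (butlast w))"
    by (simp add: butlast_tl)
  then show ?thesis by (simp add: inner_alternating_def)
qed

lemma inner_alternating_sublist: "sublist u w \<Longrightarrow> inner_alternating w \<Longrightarrow> inner_alternating u"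
  unfolding inner_alternating_def
  by (metis distinct_adj_sublist sublist_tl_tl sublist_butlast_butlast)

lemma inner_alternating_Cons_swap: "inner_alternating (s # w) \<longleftrightarrow> inner_alternating (t # w)"
  by (cases w rule: rev_cases) (simp_all add: inner_alternating_def)

lemma distinct_adj_imp_inner_alternating: "distinct_adj w \<Longrightarrow> inner_alternating w"
  unfolding inner_alternating_def
  by (meson distinct_adj_sublist sublist_order.order.trans sublist_tl sublist_butlast)

section \<open>Parts of positions reachable from (ox)^n\<close>

(* All runs of stones, not only the maximal ones, so that the invariant is stable when a part
   splits. *)
definition runs_inner_alternating :: "board \<Rightarrow> bool" where
  "runs_inner_alternating b \<longleftrightarrow> (\<forall>u. sublist (map Some u) b \<longrightarrow> inner_alternating u)"

lemma runs_inner_alternating_rev: "runs_inner_alternating (rev b) \<longleftrightarrow> runs_inner_alternating b"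
  unfolding runs_inner_alternating_def sublist_rev_right rev_map
  by (metis inner_alternating_rev rev_rev_ident)

lemma runs_inner_alternating_board_of:
  "distinct_adj w \<Longrightarrow> runs_inner_alternating (board_of w)"
  unfolding runs_inner_alternating_def board_of_def
  by (metis sublist_map_rightE distinct_adj_sublist distinct_adj_imp_inner_alternating
      list.inj_map_strong option.inject)

lemma capture_right_preserves_runs_inner_alternating:
  assumes "runs_inner_alternating (L @ [Some c, Some (opp c)] @ R)"
  shows "runs_inner_alternating (L @ [None, Some c] @ R)"
  unfolding runs_inner_alternating_def
proof (intro allI impI)
  fix u assume "sublist (map Some u) (L @ [None, Some c] @ R)"
  then have "sublist (map Some u) L \<or> sublist (map Some u) (Some c # R)"
    using sublist_append_Cons_notin[of "map Some u" L None] by auto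
  then consider "sublist (map Some u) L" | "sublist (map Some u) R"
    | v where "u = c # v" "prefix (map Some v) R"
    by (cases u) (auto simp: sublist_Cons_right)
  then show "inner_alternating u"
  proof cases
    case 1
    then have "sublist (map Some u) (L @ [Some c, Some (opp c)] @ R)"
      by (metis sublist_order.order.trans sublist_append_rightI)
    then show ?thesis using assms by (simp add: runs_inner_alternating_def)
  next
    case 2
    then have "sublist (map Some u) (L @ [Some c, Some (opp c)] @ R)"
      by (metis sublist_order.order.trans sublist_append_leftI)
    then show ?thesis using assms by (simp add: runs_inner_alternating_def)
  next
    case 3
    then obtain r where "R = map Some v @ r"
      by (auto simp: prefix_def)
    then have "sublist (map Some (opp c # v)) (L @ [Some c, Some (opp c)] @ R)"
      by (metis sublist_appendI append.assoc append_Cons append_Nil list.simps(9))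
    then have "inner_alternating (opp c # v)"
      using assms by (simp add: runs_inner_alternating_def)
    then show ?thesis
      unfolding \<open>u = c # v\<close> by (rule inner_alternating_Cons_swap[THEN iffD1])
  qed
qed

lemma clobber_move_cases:
  assumes "clobber_move b b'"
  obtains (right) L R c where "b = L @ [Some c, Some (opp c)] @ R" "b' = L @ [None, Some c] @ R"
    | (left) L R c where "b = L @ [Some (opp c), Some c] @ R" "b' = L @ [Some c, None] @ R"
proof -
  obtain i j c where ij: "i < length b" "j < length b" "j = Suc i \<or> i = Suc j"
    "b ! i = Some c" "b ! j = Some (opp c)" "b' = (b[j := Some c])[i := None]"
    using assms clobber_move_def by blast
  have split: "b = take k b @ [b ! k, b ! Suc k] @ drop (Suc (Suc k)) b" if "Suc k < length b" for k
    using that by (metis Cons_nth_drop_Suc Suc_lessD append_Cons append_Nil append_take_drop_id)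
  from ij(3) show thesis
  proof
    assume j: "j = Suc i"
    obtain L R where b: "b = L @ [Some c, Some (opp c)] @ R" and "length L = i"
      using split[of i] ij j by (metis length_take min_absorb2 less_imp_le_nat)
    then have "b' = L @ [None, Some c] @ R"
      using ij(6) j by (simp add: list_update_append)
    with b show thesis by (rule right)
  next
    assume i: "i = Suc j"
    obtain L R where b: "b = L @ [Some (opp c), Some c] @ R" and "length L = j"
      using split[of j] ij i by (metis length_take min_absorb2 less_imp_le_nat)
    then have "b' = L @ [Some c, None] @ R"
      using ij(6) i by (simp add: list_update_append)
    with b show thesis by (rule left)
  qed
qed

lemma clobber_move_preserves_runs_inner_alternating:
  assumes "clobber_move b b'" "runs_inner_alternating b"
  shows "runs_inner_alternating b'"
  using assms(1)
proof (cases rule: clobber_move_cases)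
  case (right L R c)
  then show ?thesis
    using assms(2) capture_right_preserves_runs_inner_alternating by simp
next
  case (left L R c)
  then have "rev b = rev R @ [Some c, Some (opp c)] @ rev L" "rev b' = rev R @ [None, Some c] @ rev L"
    by simp_all
  then show ?thesis
    using assms(2) capture_right_preserves_runs_inner_alternating runs_inner_alternating_rev
    by metis
qed

lemma reachable_preserves_runs_inner_alternating:
  "reachable b b' \<Longrightarrow> runs_inner_alternating b \<Longrightarrow> runs_inner_alternating b'"
  unfolding reachable_def
  by (induction rule: rtranclp_induct) (auto intro: clobber_move_preserves_runs_inner_alternating)

lemma is_part_imp_sublist: "is_part p b \<Longrightarrow> sublist (map Some p) b"
  unfolding is_part_def by (metis sublist_order.order.trans sublist_take sublist_drop)

lemma appears_from_A_imp_inner_alternating: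
  assumes "appears_from_A w"
  shows "inner_alternating w"
proof -
  obtain q b p where q: "q \<in> famA" "reachable (board_of q) b" "is_part p b" "p = w \<or> p = rev w"
    using assms appears_from_A_def by blast
  have "distinct_adj q"
    using q(1) distinct_adj_rep[of Wo Bx] by (auto simp: famA_def)
  then have "runs_inner_alternating b"
    using q(2) runs_inner_alternating_board_of reachable_preserves_runs_inner_alternating by blast
  then have "inner_alternating p"
    using is_part_imp_sublist[OF q(3)] by (simp add: runs_inner_alternating_def)
  then show ?thesis using q(4) by auto
qed

section \<open>Classification of the non-trivial inner-alternating words\<close>

lemma famAll_members:
  "1 \<le> n \<Longrightarrow> rep n [Wo, Bx] \<in> famAll"
  "Wo # rep t [Bx, Wo] \<in> famAll"
  "Wo # rep t [Wo, Bx] \<in> famAll"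
  "Wo # Wo # rep t [Bx, Wo] \<in> famAll"
  "Wo # Wo # rep t [Bx, Wo] @ [Wo] \<in> famAll"
  "1 \<le> n \<Longrightarrow> Wo # rep n [Wo, Bx] @ [Bx] \<in> famAll"
  "Bx # rep t [Wo, Bx] \<in> famAll"
  "Bx # rep t [Bx, Wo] \<in> famAll"
  "Bx # Bx # rep t [Wo, Bx] \<in> famAll"
  "Bx # Bx # rep t [Wo, Bx] @ [Bx] \<in> famAll"
  unfolding famAll_def famA_def famO_def fam_oA_def fam_oO_def fam_oOo_def fam_oAx_def neg_part_def
  by (auto simp: rep_map image_iff)

lemma nontrivial_iff_not_constant: "nontrivial w \<longleftrightarrow> \<not> successively (=) w"
  by (auto simp: nontrivial_def successively_conv_nth)

lemma nontrivial_inner_alternating_in_famAll: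
  assumes "nontrivial w" "inner_alternating w"
  shows "w \<in> famAll \<or> rev w \<in> famAll"
proof -
  obtain a m b where w: "w = a # m @ [b]"
    using assms(1) unfolding nontrivial_iff_not_constant
    by (metis successively.simps(1,2) rev_exhaust neq_Nil_conv)
  then have "distinct_adj m"
    using assms(2) by (simp add: inner_alternating_def)
  have short: "[Wo, Bx] \<in> famAll" "[Wo, Bx, Wo] \<in> famAll" "[Wo, Wo, Bx] \<in> famAll"
    "[Bx, Wo, Bx] \<in> famAll" "[Bx, Bx, Wo] \<in> famAll"
    using famAll_members(1)[of 1] famAll_members(2,3,7,8)[of 1] by (simp_all add: rep_Suc)
  show ?thesis
  proof (cases m)
    case Nil
    then show ?thesis
      using assms(1) w short by (cases a; cases b) (auto simp: nontrivial_iff_not_constant)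
  next
    case (Cons s m')
    then obtain n where "m = rep (Suc n) [s, opp s] \<or> m = rep n [s, opp s] @ [s]"
      using \<open>distinct_adj m\<close> distinct_adj_Cons_rep by blast
    then show ?thesis using assms(1) w
      by (cases a; cases b; cases s; cases n)
         (auto simp: short famAll_members nontrivial_iff_not_constant
            rep_snoc rep_append_Cons rep_rev Cons_Cons_rep)
  qed
qed

section \<open>Realising the families\<close>

lemma capture_rightI:
  "b = L @ [Some c, Some (opp c)] @ R \<Longrightarrow> b' = L @ [None, Some c] @ R \<Longrightarrow> reachable b b'"
  unfolding reachable_def clobber_move_def
  by (intro r_into_rtranclp exI[of _ "length L"] exI[of _ "Suc (length L)"] exI[of _ c])
     (simp add: nth_append list_update_append)

lemma capture_leftI:
  "b = L @ [Some (opp c), Some c] @ R \<Longrightarrow> b' = L @ [Some c, None] @ R \<Longrightarrow> reachable b b'"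
  unfolding reachable_def clobber_move_def
  by (intro r_into_rtranclp exI[of _ "Suc (length L)"] exI[of _ "length L"] exI[of _ c])
     (simp add: nth_append list_update_append)

lemma reachable_trans [trans]: "reachable b b' \<Longrightarrow> reachable b' b'' \<Longrightarrow> reachable b b''"
  unfolding reachable_def by (rule rtranclp_trans)

lemma is_partI:
  assumes "p \<noteq> []" "l = [] \<or> last l = None" "r = [] \<or> hd r = None"
  shows "is_part p (l @ map Some p @ r)"
  unfolding is_part_def
proof (intro conjI exI[of _ "length l"])
  show "length l = 0 \<or> (l @ map Some p @ r) ! (length l - 1) = None"
    using assms(2) by (cases l rule: rev_cases) (auto simp: nth_append)
  show "length l + length p = length (l @ map Some p @ r) \<or>
        (l @ map Some p @ r) ! (length l + length p) = None"
    using assms(3) by (cases r) (auto simp: nth_append)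
qed (use assms(1) in simp_all)

lemma appears_from_AI:
  assumes "reachable (board_of (rep n [Wo, Bx])) (l @ map Some p @ r)" "1 \<le> n"
    "p \<noteq> []" "l = [] \<or> last l = None" "r = [] \<or> hd r = None" "p = w \<or> p = rev w"
  shows "appears_from_A w"
  using assms is_partI unfolding appears_from_A_def famA_def by blast

lemma appears_famA: "1 \<le> n \<Longrightarrow> appears_from_A (rep n [Wo, Bx])"
  by (rule appears_from_AI[of n "[]" _ "[]"])
     (auto simp: reachable_def board_of_def rep_def)

lemma appears_famO: "appears_from_A (Wo # rep t [Bx, Wo])"
proof (rule appears_from_AI)
  show "reachable (board_of (rep (Suc (Suc t)) [Wo, Bx]))
          ([] @ map Some (rep t [Wo, Bx] @ [Wo]) @ [None, Some Bx, Some Bx])"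
    by (rule capture_rightI[where L = "map Some (rep t [Wo, Bx] @ [Wo])"
         and c = Bx and R = "[Some Bx]"])
       (simp_all add: board_of_def rep_Suc_right)
qed (simp_all add: rep_snoc)

lemma appears_neg_famO: "appears_from_A (Bx # rep t [Wo, Bx])"
proof (rule appears_from_AI)
  show "reachable (board_of (rep (Suc (Suc t)) [Wo, Bx]))
          ([Some Wo, Some Wo, None] @ map Some (Bx # rep t [Wo, Bx]) @ [])"
    by (rule capture_leftI[where L = "[Some Wo]"
         and c = Wo and R = "map Some (Bx # rep t [Wo, Bx])"])
       (simp_all add: board_of_def rep_Suc)
qed simp_all

lemma appears_fam_oA: "appears_from_A (Wo # rep t [Wo, Bx])"
proof (rule appears_from_AI)
  show "reachable (board_of (rep (Suc t) [Wo, Bx])) ([None] @ map Some (Wo # rep t [Wo, Bx]) @ [])"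
    by (rule capture_rightI[where L = "[]"
         and c = Wo and R = "map Some (rep t [Wo, Bx])"])
       (simp_all add: board_of_def rep_Suc)
qed simp_all

lemma appears_neg_fam_oA: "appears_from_A (Bx # rep t [Bx, Wo])"
proof (rule appears_from_AI)
  show "reachable (board_of (rep (Suc t) [Wo, Bx])) ([] @ map Some (rep t [Wo, Bx] @ [Bx]) @ [None])"
    by (rule capture_leftI[where L = "map Some (rep t [Wo, Bx])"
         and c = Bx and R = "[]"])
       (simp_all add: board_of_def rep_Suc_right)
qed (simp_all add: rep_rev)

lemma appears_fam_oO: "appears_from_A (Wo # Wo # rep t [Bx, Wo])"
proof (rule appears_from_AI)
  show "reachable (board_of (rep (Suc (Suc t)) [Wo, Bx]))
          ([] @ map Some (rep t [Wo, Bx] @ [Wo, Wo]) @ [None, Some Bx])"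
    by (rule capture_leftI[where L = "map Some (rep t [Wo, Bx] @ [Wo])"
         and c = Wo and R = "[Some Bx]"])
       (simp_all add: board_of_def rep_Suc_right)
qed (simp_all add: rep_rev)

lemma appears_neg_fam_oO: "appears_from_A (Bx # Bx # rep t [Wo, Bx])"
proof (rule appears_from_AI)
  show "reachable (board_of (rep (Suc (Suc t)) [Wo, Bx]))
          ([Some Wo, None] @ map Some (Bx # Bx # rep t [Wo, Bx]) @ [])"
    by (rule capture_rightI[where L = "[Some Wo]"
         and c = Bx and R = "map Some (Bx # rep t [Wo, Bx])"])
       (simp_all add: board_of_def rep_Suc)
qed simp_all

lemma appears_fam_oOo: "appears_from_A (Wo # Wo # rep t [Bx, Wo] @ [Wo])"
proof (rule appears_from_AI)
  let ?m = "map Some (rep t [Bx, Wo])"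
  have start: "rep (Suc (Suc (Suc t))) [Wo, Bx] = [Wo, Bx, Wo] @ rep t [Bx, Wo] @ [Bx, Wo, Bx]"
    by (simp add: rep_Suc_right rep_append_Cons)
  have "reachable (board_of (rep (Suc (Suc (Suc t))) [Wo, Bx]))
          ([None, Some Wo, Some Wo] @ ?m @ [Some Bx, Some Wo, Some Bx])"
    by (rule capture_rightI[where L = "[]"
         and c = Wo and R = "Some Wo # ?m @ [Some Bx, Some Wo, Some Bx]"])
       (simp_all add: board_of_def start)
  also have "reachable \<dots> ([None] @ map Some (Wo # Wo # rep t [Bx, Wo] @ [Wo]) @ [None, Some Bx])"
    by (rule capture_leftI[where L = "[None, Some Wo, Some Wo] @ ?m"
         and c = Wo and R = "[Some Bx]"])
       simp_all
  finally show "reachable (board_of (rep (Suc (Suc (Suc t))) [Wo, Bx]))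
          ([None] @ map Some (Wo # Wo # rep t [Bx, Wo] @ [Wo]) @ [None, Some Bx])" .
qed simp_all

lemma appears_neg_fam_oOo: "appears_from_A (Bx # Bx # rep t [Wo, Bx] @ [Bx])"
proof (rule appears_from_AI)
  let ?m = "map Some (rep t [Wo, Bx])"
  have start: "rep (Suc (Suc (Suc t))) [Wo, Bx] = [Wo, Bx, Wo, Bx] @ rep t [Wo, Bx] @ [Wo, Bx]"
    by (simp add: rep_Suc_right rep_append_Cons)
  have "reachable (board_of (rep (Suc (Suc (Suc t))) [Wo, Bx]))
          ([Some Wo, None, Some Bx, Some Bx] @ ?m @ [Some Wo, Some Bx])"
    by (rule capture_rightI[where L = "[Some Wo]"
         and c = Bx and R = "Some Bx # ?m @ [Some Wo, Some Bx]"])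
       (simp_all add: board_of_def start)
  also have "reachable \<dots> ([Some Wo, None] @ map Some (Bx # Bx # rep t [Wo, Bx] @ [Bx]) @ [None])"
    by (rule capture_leftI[where L = "[Some Wo, None, Some Bx, Some Bx] @ ?m"
         and c = Bx and R = "[]"])
       simp_all
  finally show "reachable (board_of (rep (Suc (Suc (Suc t))) [Wo, Bx]))
          ([Some Wo, None] @ map Some (Bx # Bx # rep t [Wo, Bx] @ [Bx]) @ [None])" .
qed simp_all

lemma appears_fam_oAx: "appears_from_A (Wo # rep n [Wo, Bx] @ [Bx])"
proof (rule appears_from_AI)
  let ?m = "map Some (rep n [Wo, Bx])"
  have start: "rep (Suc (Suc n)) [Wo, Bx] = [Wo, Bx] @ rep n [Wo, Bx] @ [Wo, Bx]"
    by (simp add: rep_Suc_right rep_append_Cons)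
  have "reachable (board_of (rep (Suc (Suc n)) [Wo, Bx])) ([None, Some Wo] @ ?m @ [Some Wo, Some Bx])"
    by (rule capture_rightI[where L = "[]"
         and c = Wo and R = "?m @ [Some Wo, Some Bx]"])
       (simp_all add: board_of_def start)
  also have "reachable \<dots> ([None] @ map Some (Wo # rep n [Wo, Bx] @ [Bx]) @ [None])"
    by (rule capture_leftI[where L = "[None, Some Wo] @ ?m"
         and c = Bx and R = "[]"])
       simp_all
  finally show "reachable (board_of (rep (Suc (Suc n)) [Wo, Bx]))
          ([None] @ map Some (Wo # rep n [Wo, Bx] @ [Bx]) @ [None])" .
qed simp_all

lemma famAll_appears_from_A: "w \<in> famAll \<Longrightarrow> appears_from_A w"
  unfolding famAll_def famA_def famO_def fam_oA_def fam_oO_def fam_oOo_def fam_oAx_def neg_part_def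
  by (auto simp: rep_map intro: appears_famA appears_famO appears_neg_famO appears_fam_oA
      appears_neg_fam_oA appears_fam_oO appears_neg_fam_oO appears_fam_oOo appears_neg_fam_oOo
      appears_fam_oAx)

lemma appears_from_A_rev: "appears_from_A (rev w) \<longleftrightarrow> appears_from_A w"
  unfolding appears_from_A_def by auto

theorem theorem1:
  "{w. nontrivial w \<and> appears_from_A w} =
   {w. nontrivial w \<and> (w \<in> famAll \<or> rev w \<in> famAll)}"
proof -
  have "appears_from_A w \<longleftrightarrow> w \<in> famAll \<or> rev w \<in> famAll" if "nontrivial w" for w
    using that famAll_appears_from_A appears_from_A_rev appears_from_A_imp_inner_alternating
      nontrivial_inner_alternating_in_famAll
    by metis
  then show ?thesis by blast
qed

end
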